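(* Let $q:\mathsf D\to\mathbb R$ be a query with sensitivity $\Delta q\in(0,\infty)$, and let $\Lambda$ be a random variable with support in $(0,\infty)$ and $\mathbb E[\Lambda]<\infty$, with MGF $M_\Lambda(t)=\mathbb E[e^{t\Lambda}]$. Then the Randomized DP Laplace mechanism $\mathcal M_q$ with reciprocal scale $\Lambda$ is $\epsilon$-differentially private with $$\epsilon=\ln\left[\frac{\mathbb E(\Lambda)}{M_\Lambda'(-\Delta q)}\right],\qquad M'_\Lambda(-\Delta q)=\frac{d M_\Lambda(t)}{dt}\Big|_{t=-\Delta q}=\mathbb E\big[\Lambda e^{-\Delta q\,\Lambda}\big].$$
   Context: Databases form a set $\mathsf D$ with a symmetric adjacency relation $\mathrm{Adj}$. The sensitivity of $q:\mathsf D\to\mathbb R$ is $\Delta q=\sup\{|q(d)-q(d')|:\mathrm{Adj}(d,d')\}$. A randomized mechanism $M$ is $\epsilon$-differentially private if $\mathbb P(M(d)\in S)\le e^{\epsilon}\mathbb P(M(d')\in S)$ for all adjacent $d,d'$ and all Borel sets $S$. The Randomized DP Laplace mechanism with reciprocal-scale distribution $\Lambda$ (a random variable with values in $(0,\infty)$, playing the role of $1/b$ for the Laplace scale $b$) is defined by $\mathcal M_q(d)=q(d)+W$, where conditionally on $\Lambda=\lambda$ the noise $W$ is Laplace with mean $0$ and scale $1/\lambda$, i.e. has density $\frac{\lambda}{2}e^{-\lambda|w|}$; the pair $(\Lambda,W)$ is drawn independently of $d$. *)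

theory Defs
  imports "HOL-Probability.Probability"
begin

text \<open>Sensitivity of a query w.r.t. an adjacency relation, valued in the extended reals
  (the supremum of the empty set is 0 here, and it is \<infinity> for unbounded differences).\<close>
definition sensitivity :: "('d \<Rightarrow> 'd \<Rightarrow> bool) \<Rightarrow> ('d \<Rightarrow> real) \<Rightarrow> ereal" where
  "sensitivity Adj q = (SUP p \<in> {(d, d'). Adj d d'}. ereal \<bar>q (fst p) - q (snd p)\<bar>)"

definition laplace_density :: "real \<Rightarrow> real \<Rightarrow> real \<Rightarrow> real" where
  "laplace_density lam mu x = lam / 2 * exp (- lam * \<bar>x - mu\<bar>)"

text \<open>Randomized DP Laplace mechanism: L is the distribution of the reciprocal scale Lambda;
  the output distribution on database d is the mixture over Lambda of Laplace(q d, 1/Lambda).\<close>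
definition rand_laplace_mech :: "real measure \<Rightarrow> ('d \<Rightarrow> real) \<Rightarrow> 'd \<Rightarrow> real measure" where
  "rand_laplace_mech L q d =
     L \<bind> (\<lambda>lam. density lborel (\<lambda>x. ennreal (laplace_density lam (q d) x)))"

definition differentially_private ::
    "('d \<Rightarrow> 'd \<Rightarrow> bool) \<Rightarrow> ('d \<Rightarrow> real measure) \<Rightarrow> real \<Rightarrow> bool" where
  "differentially_private Adj M \<epsilon> \<longleftrightarrow>
     (\<forall>d d'. Adj d d' \<longrightarrow>
        (\<forall>S \<in> sets borel. measure (M d) S \<le> exp \<epsilon> * measure (M d') S))"

definition mgf :: "real measure \<Rightarrow> real \<Rightarrow> real" where
  "mgf L t = (\<integral>l. exp (t * l) \<partial>L)"

end

theory Submission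
  imports Defs
begin

text \<open>Conditionally on \<open>\<Lambda> = \<lambda>\<close> the output has density \<open>\<lambda>/2 \<cdot> exp (- \<lambda> |x - q d|)\<close>;
  integrating out \<open>\<Lambda>\<close>, the mechanism has density \<open>T |x - q d| / 2\<close> where
  \<open>T b = E[\<Lambda> exp (- b \<Lambda>)] = M\<^sub>\<Lambda>'(- b)\<close> (\<open>tilted_mean\<close> below). \<open>T\<close> is decreasing, and
  Chebyshev's association inequality for the measure \<open>\<lambda> dL\<close> gives \<open>T u \<cdot> T v \<le> T 0 \<cdot> T (u + v)\<close>.
  Together these yield \<open>T b \<le> T 0 / T \<Delta> \<cdot> T a\<close> whenever \<open>a - \<Delta> \<le> b\<close>, which bounds the ratio
  of the output densities of adjacent databases by \<open>E[\<Lambda>] / M\<^sub>\<Lambda>'(- \<Delta>q)\<close>.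
  For \<open>t < 0\<close> and \<open>\<Lambda> \<ge> 0\<close> the second-order Taylor remainder of \<open>exp ((t + h) \<Lambda>)\<close> is bounded
  by a constant times \<open>h\<^sup>2\<close>, uniformly in \<open>\<Lambda>\<close>, which gives the derivative of the MGF.\<close>

lemma exp_taylor_remainder_le: "\<bar>exp y - 1 - y\<bar> \<le> y^2 * exp \<bar>y\<bar>" for y :: real
proof -
  obtain s where s: "\<bar>s\<bar> \<le> \<bar>y\<bar>" "exp y = (\<Sum>m<2. y^m / fact m) + exp s / fact 2 * y^2"
    using Maclaurin_exp_le[of y 2] by blast
  have eq: "exp y - 1 - y = exp s / 2 * y^2"
    using s(2) by (simp add: numeral_2_eq_2)
  have "exp s \<le> exp \<bar>y\<bar>"
    using s(1) by simp
  then have "exp s / 2 \<le> exp \<bar>y\<bar>"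
    using exp_gt_zero[of s] by linarith
  then have "exp s / 2 * y^2 \<le> exp \<bar>y\<bar> * y^2"
    by (rule mult_right_mono) simp
  then show ?thesis
    unfolding eq by (simp add: mult.commute)
qed

lemma sq_mult_exp_neg_le:
  fixes l c :: real
  assumes "0 \<le> l" "0 < c"
  shows "l^2 * exp (- c * l) \<le> 4 / c^2"
proof -
  have "c * l / 2 \<le> exp (c * l / 2)"
    using exp_ge_add_one_self[of "c * l / 2"] by linarith
  then have "(c * l / 2)^2 \<le> exp (c * l / 2)^2"
    using assms by (intro power_mono) auto
  also have "exp (c * l / 2)^2 = exp (c * l)"
    by (simp add: power2_eq_square flip: exp_add)
  finally have "c^2 * (l^2 * exp (- c * l)) \<le> 4"
    by (simp add: power_mult_distrib power_divide exp_minus field_simps)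
  then show ?thesis
    using assms by (simp add: field_simps)
qed

lemma exp_mult_remainder_le:
  fixes l t h :: real
  assumes "0 \<le> l" "t < 0" "\<bar>h\<bar> \<le> - t / 2"
  shows "\<bar>exp ((t + h) * l) - exp (t * l) - h * (l * exp (t * l))\<bar> \<le> 16 / t^2 * h^2"
proof -
  have "exp ((t + h) * l) - exp (t * l) - h * (l * exp (t * l))
      = exp (t * l) * (exp (h * l) - 1 - h * l)"
    by (simp add: algebra_simps flip: exp_add)
  then have "\<bar>exp ((t + h) * l) - exp (t * l) - h * (l * exp (t * l))\<bar>
      = exp (t * l) * \<bar>exp (h * l) - 1 - h * l\<bar>"
    by (simp add: abs_mult)
  also have "\<dots> \<le> exp (t * l) * ((h * l)^2 * exp \<bar>h * l\<bar>)"
    by (intro mult_left_mono exp_taylor_remainder_le) simp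
  also have "\<dots> = h^2 * (l^2 * exp ((t + \<bar>h\<bar>) * l))"
    using assms(1) by (simp add: abs_mult power_mult_distrib algebra_simps flip: exp_add)
  also have "\<dots> \<le> h^2 * (l^2 * exp (- (- t / 2) * l))"
    using assms by (intro mult_left_mono exp_mono mult_right_mono) auto
  also have "\<dots> \<le> h^2 * (4 / (- t / 2)^2)"
    using assms by (intro mult_left_mono sq_mult_exp_neg_le) auto
  finally show ?thesis
    by (simp add: power_divide mult.commute)
qed

lemma has_real_derivative_if_quadratic_remainder:
  fixes f :: "real \<Rightarrow> real"
  assumes "0 < r" and remainder: "\<And>h. \<bar>h\<bar> < r \<Longrightarrow> \<bar>f (x + h) - f x - h * D\<bar> \<le> K * h^2"
  shows "(f has_real_derivative D) (at x)"
proof -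
  have "((\<lambda>h. (f (x + h) - f x) / h - D) \<longlongrightarrow> 0) (at 0)"
  proof (rule Lim_null_comparison)
    have "\<forall>\<^sub>F h in at (0::real). \<bar>h\<bar> < r \<and> h \<noteq> 0"
      using \<open>0 < r\<close> by (auto simp: eventually_at intro!: exI[of _ r])
    then show "\<forall>\<^sub>F h in at 0. norm ((f (x + h) - f x) / h - D) \<le> K * \<bar>h\<bar>"
    proof eventually_elim
      case (elim h)
      have "norm ((f (x + h) - f x) / h - D) = \<bar>f (x + h) - f x - h * D\<bar> / \<bar>h\<bar>"
        using elim by (simp add: field_simps)
      also have "\<dots> \<le> K * h^2 / \<bar>h\<bar>"
        using remainder elim by (intro divide_right_mono) auto
      also have "\<dots> = K * \<bar>h\<bar>"
        using elim by (simp add: power2_eq_square abs_mult_self_eq[symmetric, of h] del: abs_mult_self_eq)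
      finally show ?case .
    qed
    show "((\<lambda>h. K * \<bar>h\<bar>) \<longlongrightarrow> 0) (at 0)"
      by (intro tendsto_mult_right_zero tendsto_rabs_zero tendsto_ident_at)
  qed
  then show ?thesis
    unfolding DERIV_def by (rule LIM_zero_cancel)
qed

context real_distribution
begin

lemma integrable_exp_mult_nonpos:
  assumes "AE l in M. 0 \<le> l" "t \<le> 0"
  shows "integrable M (\<lambda>l. exp (t * l))"
proof (rule integrable_const_bound[where B = 1])
  show "AE l in M. norm (exp (t * l)) \<le> 1"
    using assms(1) by eventually_elim (use assms(2) in \<open>auto simp: mult_nonpos_nonneg\<close>)
qed simp

lemma integrable_mult_exp_neg:
  assumes "AE l in M. 0 \<le> l" "t < 0"
  shows "integrable M (\<lambda>l. l * exp (t * l))"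
proof (rule integrable_const_bound[where B = "- 1 / t"])
  show "AE l in M. norm (l * exp (t * l)) \<le> - 1 / t"
    using assms(1)
  proof eventually_elim
    case (elim l)
    have "- t * l \<le> exp (- t * l)"
      using exp_ge_add_one_self[of "- t * l"] by linarith
    then have "- t * (l * exp (t * l)) \<le> 1"
      by (simp add: exp_minus field_simps)
    then show ?case
      using elim assms(2) by (simp add: field_simps abs_mult)
  qed
qed simp

lemma mgf_remainder_le:
  assumes "AE l in M. 0 \<le> l" "t < 0" "\<bar>h\<bar> \<le> - t / 2"
  shows "\<bar>mgf M (t + h) - mgf M t - h * (\<integral>l. l * exp (t * l) \<partial>M)\<bar> \<le> 16 / t^2 * h^2"
proof -
  have int_th: "integrable M (\<lambda>l. exp ((t + h) * l))" and int_t: "integrable M (\<lambda>l. exp (t * l))"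
    using assms by (intro integrable_exp_mult_nonpos; simp)+
  have int_d: "integrable M (\<lambda>l. l * exp (t * l))"
    using assms by (intro integrable_mult_exp_neg)
  have "mgf M (t + h) - mgf M t - h * (\<integral>l. l * exp (t * l) \<partial>M)
      = (\<integral>l. exp ((t + h) * l) - exp (t * l) - h * (l * exp (t * l)) \<partial>M)"
    unfolding mgf_def using int_th int_t int_d by simp
  also have "\<bar>\<dots>\<bar> \<le> 16 / t^2 * h^2"
  proof -
    have ae: "AE l in M. \<bar>exp ((t + h) * l) - exp (t * l) - h * (l * exp (t * l))\<bar> \<le> 16 / t^2 * h^2"
      using assms(1) by eventually_elim (rule exp_mult_remainder_le[OF _ assms(2,3)])
    have int: "integrable M (\<lambda>l. exp ((t + h) * l) - exp (t * l) - h * (l * exp (t * l)))"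
      using int_th int_t int_d by simp
    have "(\<integral>l. exp ((t + h) * l) - exp (t * l) - h * (l * exp (t * l)) \<partial>M) \<le> 16 / t^2 * h^2"
      by (rule integral_le_const[OF int]) (use ae in \<open>eventually_elim, simp\<close>)
    moreover have "- (16 / t^2 * h^2) \<le> (\<integral>l. exp ((t + h) * l) - exp (t * l) - h * (l * exp (t * l)) \<partial>M)"
      by (rule integral_ge_const[OF int]) (use ae in \<open>eventually_elim, simp\<close>)
    ultimately show ?thesis
      by (intro abs_leI) linarith+
  qed
  finally show ?thesis .
qed

lemma mgf_has_real_derivative:
  assumes "AE l in M. 0 \<le> l" "t < 0"
  shows "(mgf M has_real_derivative (\<integral>l. l * exp (t * l) \<partial>M)) (at t)"
proof (rule has_real_derivative_if_quadratic_remainder)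
  show "0 < - t / 2"
    using assms(2) by simp
  show "\<bar>mgf M (t + h) - mgf M t - h * (\<integral>l. l * exp (t * l) \<partial>M)\<bar> \<le> 16 / t^2 * h^2"
    if "\<bar>h\<bar> < - t / 2" for h
    using that by (intro mgf_remainder_le assms) simp
qed

end

lemma exp_neg_cross_terms_le:
  fixes l m u v :: real
  assumes "0 < l" "0 < m" "0 \<le> u" "0 \<le> v"
  shows "l * exp (- u * l) * (m * exp (- v * m)) + l * exp (- v * l) * (m * exp (- u * m))
    \<le> l * (m * exp (- (u + v) * m)) + l * exp (- (u + v) * l) * m"
proof -
  have "0 \<le> (exp (- u * l) - exp (- u * m)) * (exp (- v * l) - exp (- v * m))"
  proof (cases "l \<le> m")
    case True
    then show ?thesis
      using assms by (intro mult_nonneg_nonneg) (auto simp: mult_left_mono)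
  next
    case False
    then show ?thesis
      using assms by (intro mult_nonpos_nonpos) (auto simp: mult_left_mono)
  qed
  then have "0 \<le> l * m * ((exp (- u * l) - exp (- u * m)) * (exp (- v * l) - exp (- v * m)))"
    using assms by simp
  then show ?thesis
    by (simp add: algebra_simps flip: exp_add)
qed

definition tilted_mean :: "real measure \<Rightarrow> real \<Rightarrow> real" where
  "tilted_mean L b = (\<integral>l. l * exp (- b * l) \<partial>L)"

locale reciprocal_scale_distribution = real_distribution L for L :: "real measure" +
  assumes AE_pos: "AE l in L. 0 < l"
    and integrable_id: "integrable L (\<lambda>l. l)"
begin

lemma integrable_tilted:
  assumes "0 \<le> b"
  shows "integrable L (\<lambda>l. l * exp (- b * l))"
proof (rule Bochner_Integration.integrable_bound[OF integrable_id])
  show "AE l in L. norm (l * exp (- b * l)) \<le> norm l"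
    using AE_pos
  proof eventually_elim
    case (elim l)
    then have "exp (- b * l) \<le> 1"
      using assms by simp
    then show ?case
      using elim by (simp add: abs_mult mult_left_le)
  qed
qed simp

lemma tilted_mean_nonneg: "0 \<le> tilted_mean L b"
  unfolding tilted_mean_def
  by (rule integral_nonneg_AE) (use AE_pos in \<open>eventually_elim, simp\<close>)

lemma tilted_mean_pos:
  assumes "0 \<le> b"
  shows "0 < tilted_mean L b"
proof -
  have "tilted_mean L b \<noteq> 0"
  proof
    assume "tilted_mean L b = 0"
    then have "AE l in L. l * exp (- b * l) = 0"
      unfolding tilted_mean_def using AE_pos
      by (subst (asm) integral_nonneg_eq_0_iff_AE[OF integrable_tilted[OF assms]])
        (auto elim: eventually_mono)
    then have "AE l in L. False"
      using AE_pos by eventually_elim simp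
    then show False
      by simp
  qed
  then show ?thesis
    using tilted_mean_nonneg[of b] by simp
qed

lemma tilted_mean_antimono:
  assumes "0 \<le> a" "a \<le> b"
  shows "tilted_mean L b \<le> tilted_mean L a"
  unfolding tilted_mean_def
proof (rule integral_mono_AE[OF integrable_tilted integrable_tilted])
  show "AE l in L. l * exp (- b * l) \<le> l * exp (- a * l)"
    using AE_pos by eventually_elim (use assms in \<open>auto intro!: mult_left_mono mult_right_mono\<close>)
qed (use assms in auto)

lemma nn_integral_tilted:
  assumes "0 \<le> b"
  shows "(\<integral>\<^sup>+l. ennreal (l * exp (- b * l)) \<partial>L) = ennreal (tilted_mean L b)"
  unfolding tilted_mean_def
  by (rule nn_integral_eq_integral[OF integrable_tilted[OF assms]])
    (use AE_pos in \<open>eventually_elim, simp\<close>)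

text \<open>Chebyshev's association inequality: integrate \<open>exp_neg_cross_terms_le\<close> over \<open>L \<Otimes> L\<close>.\<close>
lemma tilted_mean_mult_le:
  assumes "0 \<le> u" "0 \<le> v"
  shows "tilted_mean L u * tilted_mean L v \<le> tilted_mean L 0 * tilted_mean L (u + v)"
proof -
  define f where "f b l = ennreal (l * exp (- b * l))" for b l
  have [measurable]: "f b \<in> borel_measurable L" for b
    unfolding f_def by simp
  have cross: "f u l * f v m + f v l * f u m \<le> f 0 l * f (u + v) m + f (u + v) l * f 0 m" for l m
  proof (cases "0 < l \<and> 0 < m")
    case True
    then show ?thesis
      unfolding f_def using exp_neg_cross_terms_le[of l m u v] assms
      by (simp add: ennreal_mult[symmetric] ennreal_plus[symmetric] del: ennreal_plus)
  next
    case False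
    then have zero: "f u l * f v m = 0" "f v l * f u m = 0"
      unfolding f_def by (auto simp: ennreal_neg mult_nonpos_nonneg)
    show ?thesis
      by (simp only: zero add_0 zero_le)
  qed
  have integral_f: "(\<integral>\<^sup>+l. f b l \<partial>L) = ennreal (tilted_mean L b)" if "0 \<le> b" for b
    unfolding f_def using that by (rule nn_integral_tilted)
  have double: "(\<integral>\<^sup>+l. \<integral>\<^sup>+m. f a l * f b m + f b l * f a m \<partial>L \<partial>L)
      = ennreal (2 * (tilted_mean L a * tilted_mean L b))" if "0 \<le> a" "0 \<le> b" for a b
    using that tilted_mean_nonneg
    by (simp add: nn_integral_add nn_integral_cmult nn_integral_multc integral_f mult.commute
        flip: ennreal_mult ennreal_plus)
  have "(\<integral>\<^sup>+l. \<integral>\<^sup>+m. f u l * f v m + f v l * f u m \<partial>L \<partial>L)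
      \<le> (\<integral>\<^sup>+l. \<integral>\<^sup>+m. f 0 l * f (u + v) m + f (u + v) l * f 0 m \<partial>L \<partial>L)"
    by (intro nn_integral_mono cross)
  then have "ennreal (2 * (tilted_mean L u * tilted_mean L v))
      \<le> ennreal (2 * (tilted_mean L 0 * tilted_mean L (u + v)))"
    by (simp only: double assms add_nonneg_nonneg order_refl)
  then show ?thesis
    by (subst (asm) ennreal_le_iff) (auto intro!: mult_nonneg_nonneg tilted_mean_nonneg)
qed

lemma tilted_mean_le_ratio_mult:
  assumes "0 \<le> \<Delta>" "0 \<le> a" "0 \<le> b" "a - \<Delta> \<le> b"
  shows "tilted_mean L b \<le> tilted_mean L 0 / tilted_mean L \<Delta> * tilted_mean L a"
proof -
  have "tilted_mean L b * tilted_mean L \<Delta> \<le> tilted_mean L 0 * tilted_mean L a"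
  proof (cases "a \<le> \<Delta>")
    case True
    then show ?thesis
      using assms tilted_mean_nonneg
      by (intro mult_mono tilted_mean_antimono) auto
  next
    case False
    have "tilted_mean L b * tilted_mean L \<Delta> \<le> tilted_mean L (a - \<Delta>) * tilted_mean L \<Delta>"
      using assms False tilted_mean_nonneg by (intro mult_right_mono tilted_mean_antimono) auto
    also have "\<dots> \<le> tilted_mean L 0 * tilted_mean L (a - \<Delta> + \<Delta>)"
      using assms False by (intro tilted_mean_mult_le) auto
    finally show ?thesis
      by simp
  qed
  then show ?thesis
    using tilted_mean_pos[OF assms(1)] by (simp add: field_simps)
qed

end

lemma nn_integral_laplace_density_le_1:
  "(\<integral>\<^sup>+x. ennreal (laplace_density lam \<mu> x) \<partial>lborel) \<le> 1"
proof (cases "0 < lam")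
  case False
  then have "\<And>x. ennreal (laplace_density lam \<mu> x) = 0"
    unfolding laplace_density_def by (intro ennreal_neg) (simp add: mult_nonpos_nonneg)
  then show ?thesis
    by simp
next
  case True
  define E where "E = exponential_density lam"
  have [measurable]: "E \<in> borel_measurable borel"
    unfolding E_def by simp
  have E1: "(\<integral>\<^sup>+x. ennreal (E x) \<partial>lborel) = 1"
    using prob_space.emeasure_space_1[OF prob_space_exponential_density[OF True]]
    by (simp add: E_def emeasure_density)
  have E2: "(\<integral>\<^sup>+x. ennreal (E (- x)) \<partial>lborel) = 1"
    using nn_integral_real_affine[of "\<lambda>x. ennreal (E x)" "- 1" 0] E1 by (simp add: E_def)
  have "(\<integral>\<^sup>+x. ennreal (laplace_density lam \<mu> x) \<partial>lborel)
      = (\<integral>\<^sup>+x. ennreal (laplace_density lam \<mu> (\<mu> + 1 * x)) \<partial>lborel)"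
    using nn_integral_real_affine[of "\<lambda>x. ennreal (laplace_density lam \<mu> x)" 1 \<mu>]
    by (simp add: laplace_density_def)
  also have "\<dots> \<le> (\<integral>\<^sup>+x. ennreal (1 / 2) * ennreal (E x) + ennreal (1 / 2) * ennreal (E (- x)) \<partial>lborel)"
  proof (rule nn_integral_mono)
    fix x :: real
    have "laplace_density lam \<mu> (\<mu> + 1 * x) \<le> 1 / 2 * E x + 1 / 2 * E (- x)"
      using True unfolding laplace_density_def E_def exponential_density_def
      by (cases "x < 0"; cases "x = 0") (auto simp: mult.commute)
    then have "ennreal (laplace_density lam \<mu> (\<mu> + 1 * x)) \<le> ennreal (1 / 2 * E x + 1 / 2 * E (- x))"
      by (rule ennreal_leI)
    also have "\<dots> = ennreal (1 / 2) * ennreal (E x) + ennreal (1 / 2) * ennreal (E (- x))"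
    proof -
      have nonneg: "0 \<le> 1 / 2 * E y" for y
        using True by (simp add: E_def exponential_density_nonneg)
      have half: "(0::real) \<le> 1 / 2"
        by simp
      show ?thesis
        by (simp only: ennreal_plus[OF nonneg nonneg] ennreal_mult'[OF half])
    qed
    finally show "ennreal (laplace_density lam \<mu> (\<mu> + 1 * x))
        \<le> ennreal (1 / 2) * ennreal (E x) + ennreal (1 / 2) * ennreal (E (- x))" .
  qed
  also have "\<dots> = ennreal (1 / 2) + ennreal (1 / 2)"
    by (simp add: nn_integral_add nn_integral_cmult E1 E2)
  also have "\<dots> = 1"
    by (subst ennreal_plus[symmetric]) auto
  finally show ?thesis .
qed

definition laplace_kernel :: "real \<Rightarrow> real \<Rightarrow> real measure" where
  "laplace_kernel \<mu> lam = density lborel (\<lambda>x. ennreal (laplace_density lam \<mu> x))"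

lemma rand_laplace_mech_eq_bind: "rand_laplace_mech L q d = L \<bind> laplace_kernel (q d)"
  unfolding rand_laplace_mech_def laplace_kernel_def ..

lemma laplace_kernel_measurable:
  assumes "sets L = sets borel"
  shows "laplace_kernel \<mu> \<in> measurable L (subprob_algebra borel)"
proof (rule measurable_subprob_algebra)
  show "subprob_space (laplace_kernel \<mu> lam)" for lam
  proof
    show "emeasure (laplace_kernel \<mu> lam) (space (laplace_kernel \<mu> lam)) \<le> 1"
      unfolding laplace_kernel_def using nn_integral_laplace_density_le_1[of lam \<mu>]
      by (simp add: emeasure_density laplace_density_def)
  qed (simp add: laplace_kernel_def)
  show "sets (laplace_kernel \<mu> lam) = sets borel" for lam
    by (simp add: laplace_kernel_def)
next
  fix A :: "real set"
  assume A: "A \<in> sets borel"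
  have "(\<lambda>lam. \<integral>\<^sup>+x. ennreal (laplace_density lam \<mu> x) * indicator A x \<partial>lborel) \<in> borel_measurable borel"
    using A unfolding laplace_density_def by measurable
  then show "(\<lambda>lam. emeasure (laplace_kernel \<mu> lam) A) \<in> borel_measurable L"
    unfolding laplace_kernel_def measurable_cong_sets[OF assms refl] using A
    by (subst emeasure_density) (auto simp: laplace_density_def)
qed

context reciprocal_scale_distribution
begin

lemma nn_integral_laplace_density_mixture:
  "(\<integral>\<^sup>+lam. ennreal (laplace_density lam \<mu> x) \<partial>L) = ennreal (tilted_mean L \<bar>x - \<mu>\<bar> / 2)"
proof -
  have half: "(0::real) \<le> 1 / 2"
    by simp
  have "ennreal (laplace_density lam \<mu> x) = ennreal (1 / 2) * ennreal (lam * exp (- \<bar>x - \<mu>\<bar> * lam))"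
    for lam
  proof -
    have "laplace_density lam \<mu> x = 1 / 2 * (lam * exp (- \<bar>x - \<mu>\<bar> * lam))"
      by (simp add: laplace_density_def mult.commute)
    then show ?thesis
      by (simp only: ennreal_mult'[OF half])
  qed
  then have "(\<integral>\<^sup>+lam. ennreal (laplace_density lam \<mu> x) \<partial>L)
      = ennreal (1 / 2) * (\<integral>\<^sup>+lam. ennreal (lam * exp (- \<bar>x - \<mu>\<bar> * lam)) \<partial>L)"
    by (simp only:) (rule nn_integral_cmult, simp)
  also have "\<dots> = ennreal (tilted_mean L \<bar>x - \<mu>\<bar> / 2)"
    by (simp only: nn_integral_tilted[OF abs_ge_zero] ennreal_mult'[OF half, symmetric])
      (simp add: mult.commute)
  finally show ?thesis .
qed

lemma borel_measurable_tilted_mean[measurable]: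
  "(\<lambda>x. ennreal (tilted_mean L \<bar>x - \<mu>\<bar> / 2)) \<in> borel_measurable borel"
proof -
  have "sets (borel \<Otimes>\<^sub>M L) = sets (borel \<Otimes>\<^sub>M borel)"
    by (intro sets_pair_measure_cong) simp_all
  then have "(\<lambda>(x, lam). ennreal (laplace_density lam \<mu> x)) \<in> borel_measurable (borel \<Otimes>\<^sub>M L)"
    unfolding measurable_cong_sets[OF _ refl] laplace_density_def by measurable
  then show ?thesis
    unfolding nn_integral_laplace_density_mixture[symmetric] by (rule borel_measurable_nn_integral)
qed

lemma emeasure_bind_laplace_kernel:
  assumes "A \<in> sets borel"
  shows "emeasure (L \<bind> laplace_kernel \<mu>) A
    = (\<integral>\<^sup>+x. ennreal (tilted_mean L \<bar>x - \<mu>\<bar> / 2) * indicator A x \<partial>lborel)"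
proof -
  interpret pair_sigma_finite L lborel ..
  have "sets (L \<Otimes>\<^sub>M lborel) = sets (borel \<Otimes>\<^sub>M borel)"
    by (intro sets_pair_measure_cong) simp_all
  then have [measurable]: "(\<lambda>(lam, x). ennreal (laplace_density lam \<mu> x) * indicator A x)
      \<in> borel_measurable (L \<Otimes>\<^sub>M lborel)"
    unfolding measurable_cong_sets[OF _ refl] laplace_density_def using assms by measurable
  have [measurable]: "(\<lambda>x. ennreal (laplace_density lam \<mu> x)) \<in> borel_measurable borel" for lam
    unfolding laplace_density_def by measurable
  have "emeasure (L \<bind> laplace_kernel \<mu>) A = (\<integral>\<^sup>+lam. emeasure (laplace_kernel \<mu> lam) A \<partial>L)"
    by (rule emeasure_bind[OF not_empty laplace_kernel_measurable[OF events_eq_borel] assms])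
  also have "\<dots> = (\<integral>\<^sup>+lam. \<integral>\<^sup>+x. ennreal (laplace_density lam \<mu> x) * indicator A x \<partial>lborel \<partial>L)"
    using assms by (simp add: laplace_kernel_def emeasure_density)
  also have "\<dots> = (\<integral>\<^sup>+x. \<integral>\<^sup>+lam. ennreal (laplace_density lam \<mu> x) * indicator A x \<partial>L \<partial>lborel)"
    by (rule Fubini'[symmetric]) simp
  also have "\<dots> = (\<integral>\<^sup>+x. ennreal (tilted_mean L \<bar>x - \<mu>\<bar> / 2) * indicator A x \<partial>lborel)"
  proof (rule nn_integral_cong)
    fix x
    have "(\<lambda>lam. ennreal (laplace_density lam \<mu> x)) \<in> borel_measurable L"
      unfolding laplace_density_def by measurable
    then show "(\<integral>\<^sup>+lam. ennreal (laplace_density lam \<mu> x) * indicator A x \<partial>L)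
        = ennreal (tilted_mean L \<bar>x - \<mu>\<bar> / 2) * indicator A x"
      by (simp only: nn_integral_multc nn_integral_laplace_density_mixture)
  qed
  finally show ?thesis .
qed

lemma rand_laplace_mech_eq_density:
  "rand_laplace_mech L q d = density lborel (\<lambda>x. ennreal (tilted_mean L \<bar>x - q d\<bar> / 2))"
proof -
  have sets: "sets (L \<bind> laplace_kernel (q d)) = sets borel"
    by (subst sets_bind[where N = borel]) (auto simp: laplace_kernel_def not_empty)
  show ?thesis
    unfolding rand_laplace_mech_eq_bind
    by (rule measure_eqI) (simp_all add: sets emeasure_bind_laplace_kernel emeasure_density)
qed

end

lemma measure_le_mult_if_emeasure_le:
  assumes "emeasure M A \<le> ennreal c * emeasure N A" "0 \<le> c" "emeasure N A \<noteq> \<infinity>"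
  shows "measure M A \<le> c * measure N A"
proof -
  have "measure M A \<le> enn2real (ennreal c * emeasure N A)"
    unfolding measure_def using assms
    by (intro enn2real_mono) (auto simp: ennreal_mult_less_top top.not_eq_extremum)
  also have "\<dots> = c * measure N A"
    using assms(2) by (simp add: enn2real_mult measure_def)
  finally show ?thesis .
qed

lemma abs_diff_le_sensitivity: "Adj d d' \<Longrightarrow> ereal \<bar>q d - q d'\<bar> \<le> sensitivity Adj q"
  unfolding sensitivity_def by (rule SUP_upper2[of "(d, d')"]) auto

context reciprocal_scale_distribution
begin

lemma subprob_space_rand_laplace_mech: "subprob_space (rand_laplace_mech L q d)"
  unfolding rand_laplace_mech_eq_bind
  by (rule subprob_space_bind[OF _ laplace_kernel_measurable[OF events_eq_borel]])
    (simp add: prob_space_imp_subprob_space prob_space_axioms)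

lemma emeasure_rand_laplace_mech_le:
  assumes "0 \<le> \<Delta>" "\<bar>q d - q d'\<bar> \<le> \<Delta>" "A \<in> sets borel"
  shows "emeasure (rand_laplace_mech L q d) A
    \<le> ennreal (tilted_mean L 0 / tilted_mean L \<Delta>) * emeasure (rand_laplace_mech L q d') A"
proof -
  define C where "C = tilted_mean L 0 / tilted_mean L \<Delta>"
  have "0 \<le> C"
    unfolding C_def using tilted_mean_nonneg by simp
  have "ennreal (tilted_mean L \<bar>x - q d\<bar> / 2) * indicator A x
      \<le> ennreal C * (ennreal (tilted_mean L \<bar>x - q d'\<bar> / 2) * indicator A x)" for x
  proof -
    have "tilted_mean L \<bar>x - q d\<bar> \<le> C * tilted_mean L \<bar>x - q d'\<bar>"
      unfolding C_def using assms(1,2) by (intro tilted_mean_le_ratio_mult) auto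
    then have "ennreal (tilted_mean L \<bar>x - q d\<bar> / 2) \<le> ennreal C * ennreal (tilted_mean L \<bar>x - q d'\<bar> / 2)"
      using \<open>0 \<le> C\<close> by (simp add: ennreal_leI flip: ennreal_mult')
    then show ?thesis
      unfolding mult.assoc[symmetric] by (rule mult_right_mono) simp
  qed
  then have "(\<integral>\<^sup>+x. ennreal (tilted_mean L \<bar>x - q d\<bar> / 2) * indicator A x \<partial>lborel)
      \<le> ennreal C * (\<integral>\<^sup>+x. ennreal (tilted_mean L \<bar>x - q d'\<bar> / 2) * indicator A x \<partial>lborel)"
    using assms(3) by (subst nn_integral_cmult[symmetric]) (auto intro: nn_integral_mono)
  then show ?thesis
    unfolding C_def rand_laplace_mech_eq_density using assms(3) by (simp add: emeasure_density)
qed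

lemma differentially_private_rand_laplace_mech:
  assumes "0 \<le> \<Delta>" "\<And>d d'. Adj d d' \<Longrightarrow> \<bar>q d - q d'\<bar> \<le> \<Delta>"
  shows "differentially_private Adj (rand_laplace_mech L q) (ln (tilted_mean L 0 / tilted_mean L \<Delta>))"
  unfolding differentially_private_def
proof (intro allI impI ballI)
  fix d d' and A :: "real set"
  assume "Adj d d'" "A \<in> sets borel"
  have "emeasure (rand_laplace_mech L q d') A \<noteq> \<infinity>"
    using subprob_space.emeasure_subprob_space_less_top[OF subprob_space_rand_laplace_mech] by simp
  then have "measure (rand_laplace_mech L q d) A
      \<le> tilted_mean L 0 / tilted_mean L \<Delta> * measure (rand_laplace_mech L q d') A"
    using assms \<open>Adj d d'\<close> \<open>A \<in> sets borel\<close> tilted_mean_nonneg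
    by (intro measure_le_mult_if_emeasure_le emeasure_rand_laplace_mech_le) auto
  moreover have "0 < tilted_mean L 0 / tilted_mean L \<Delta>"
    using tilted_mean_pos assms(1) by simp
  ultimately show "measure (rand_laplace_mech L q d) A
      \<le> exp (ln (tilted_mean L 0 / tilted_mean L \<Delta>)) * measure (rand_laplace_mech L q d') A"
    by simp
qed

end

theorem mainTheorem2:
  fixes Adj :: "'d \<Rightarrow> 'd \<Rightarrow> bool"
    and q :: "'d \<Rightarrow> real"
    and L :: "real measure"
  assumes "symp Adj"
    and "0 < sensitivity Adj q" and "sensitivity Adj q < \<infinity>"
    and "prob_space L" and "sets L = sets borel"
    and "AE l in L. 0 < l"
    and "integrable L (\<lambda>l. l)"
  shows "(mgf L has_real_derivative (\<integral>l. l * exp (- real_of_ereal (sensitivity Adj q) * l) \<partial>L))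
           (at (- real_of_ereal (sensitivity Adj q)))
         \<and> differentially_private Adj (rand_laplace_mech L q)
             (ln ((\<integral>l. l \<partial>L) / (\<integral>l. l * exp (- real_of_ereal (sensitivity Adj q) * l) \<partial>L)))"
proof -
  interpret reciprocal_scale_distribution L
    using assms(4-7)
    by (simp add: reciprocal_scale_distribution_def reciprocal_scale_distribution_axioms_def
        real_distribution_def real_distribution_axioms_def)
  define \<Delta> where "\<Delta> = real_of_ereal (sensitivity Adj q)"
  have sensitivity: "sensitivity Adj q = ereal \<Delta>"
    unfolding \<Delta>_def using assms(2,3) by (cases "sensitivity Adj q") auto
  have "0 < \<Delta>"
    using assms(2) sensitivity by simp
  have "AE l in L. 0 \<le> l"
    using AE_pos by eventually_elim simp
  then have "(mgf L has_real_derivative (\<integral>l. l * exp (- \<Delta> * l) \<partial>L)) (at (- \<Delta>))"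
    using \<open>0 < \<Delta>\<close> by (intro mgf_has_real_derivative) auto
  moreover have "differentially_private Adj (rand_laplace_mech L q) (ln (tilted_mean L 0 / tilted_mean L \<Delta>))"
    using \<open>0 < \<Delta>\<close> abs_diff_le_sensitivity[of Adj _ _ q] sensitivity
    by (intro differentially_private_rand_laplace_mech) auto
  ultimately show ?thesis
    unfolding \<Delta>_def tilted_mean_def by simp
qed

end
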